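(* There is an absolute constant $C$ such that the following holds. Let $f\ge 1$ and let $G$ be a simple graph on $n>10f$ vertices and $m$ edges, with some ordering of its edges, that admits an $f$-MFD blocking set. Then $m\le C\, fn\log(n/f)$. In particular, for every simple $n$-vertex graph $G$ with $n>10f$ and every edge ordering, the output $H$ of the greedy algorithm $\mathsf{FTGreedyMFDCertificate}(G,f)$ has at most $C\, fn\log(n/f)$ edges.
   Context: For a graph $G=(V,E)$ and $F\subseteq V\cup E$, $G-F$ is obtained by deleting the vertices of $F\cap V$ (with incident edges) and the edges of $F\cap E$. $F$ damages an edge $e$ if $e$ is not an edge of $G-F$. For $v\in V$ let $\deg_G(v,F)=|\{u\in N_G(v): u\in F\text{ or }\{u,v\}\in F\}|$ and $\deg_G(F)=\max_{v\in V\setminus F}\deg_G(v,F)$. Given ordered edges $e_1,\dots,e_m$ with $e_i=\{u_i,v_i\}$, let $G_{<i}=(V,\{e_1,\dots,e_{i-1}\})$. An $f$-MFD blocking set for $G$ is a collection $\{(e_i,F_i)\}_{i=1}^m$ with $F_i\subseteq V\cup E$ such that (1) $F_i$ does not damage $e_i$, (2) $u_i,v_i$ are disconnected in $G_{<i}-F_i$, and (3) $\deg_G(F_i)\le f$. The algorithm $\mathsf{FTGreedyMFDCertificate}(G,f)$: start with $H=(V,\emptyset)$; for $i=1,\dots,m$, if there exists $F\subseteq V\cup E$ with $\deg_G(F)\le f$ that does not damage $e_i$ such that $u_i$ and $v_i$ are disconnected in $H-F$, add $e_i$ to $H$; return $H$. Logarithms are base 2. *)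

theory Defs
  imports Complex_Main
begin

text \<open>A simple graph with an edge ordering: a finite vertex set V and a list es of
  distinct 2-element subsets of V (the i-th list entry is the edge e_(i+1)).
  A fault set F \<subseteq> V \<union> E is represented by a pair (FV, FE) with FV \<subseteq> V, FE \<subseteq> E.\<close>

definition simple_graph :: "'a set \<Rightarrow> 'a set list \<Rightarrow> bool" where
  "simple_graph V es \<longleftrightarrow> finite V \<and> distinct es \<and> (\<forall>e\<in>set es. e \<subseteq> V \<and> card e = 2)"

definition del_edges :: "'a set set \<Rightarrow> 'a set \<Rightarrow> 'a set set \<Rightarrow> 'a set set" where
  "del_edges E FV FE = {e \<in> E. e \<inter> FV = {} \<and> e \<notin> FE}"

definition damages :: "'a set \<Rightarrow> 'a set set \<Rightarrow> 'a set \<Rightarrow> bool" where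
  "damages FV FE e \<longleftrightarrow> e \<inter> FV \<noteq> {} \<or> e \<in> FE"

definition connected_in :: "'a set set \<Rightarrow> 'a \<Rightarrow> 'a \<Rightarrow> bool" where
  "connected_in E x y \<longleftrightarrow> (x, y) \<in> {(a, b). {a, b} \<in> E}\<^sup>*"

definition fault_deg :: "'a set set \<Rightarrow> 'a set \<Rightarrow> 'a set set \<Rightarrow> 'a \<Rightarrow> nat" where
  "fault_deg E FV FE v = card {u. {u, v} \<in> E \<and> (u \<in> FV \<or> {u, v} \<in> FE)}"

definition valid_fault :: "'a set \<Rightarrow> 'a set set \<Rightarrow> 'a set \<Rightarrow> 'a set set \<Rightarrow> nat \<Rightarrow> bool" where
  "valid_fault V E FV FE f \<longleftrightarrow> FV \<subseteq> V \<and> FE \<subseteq> E \<and> (\<forall>v\<in>V - FV. fault_deg E FV FE v \<le> f)"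

definition is_MFD_blocking_set ::
  "'a set \<Rightarrow> 'a set list \<Rightarrow> nat \<Rightarrow> (nat \<Rightarrow> 'a set \<times> 'a set set) \<Rightarrow> bool" where
  "is_MFD_blocking_set V es f Fs \<longleftrightarrow>
     (\<forall>i < length es. valid_fault V (set es) (fst (Fs i)) (snd (Fs i)) f
        \<and> \<not> damages (fst (Fs i)) (snd (Fs i)) (es ! i)
        \<and> (\<forall>x y. es ! i = {x, y} \<longrightarrow>
              \<not> connected_in (del_edges (set (take i es)) (fst (Fs i)) (snd (Fs i))) x y))"

definition admits_MFD_blocking_set :: "'a set \<Rightarrow> 'a set list \<Rightarrow> nat \<Rightarrow> bool" where
  "admits_MFD_blocking_set V es f \<longleftrightarrow> (\<exists>Fs. is_MFD_blocking_set V es f Fs)"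

definition greedy_step :: "'a set \<Rightarrow> 'a set set \<Rightarrow> nat \<Rightarrow> 'a set \<Rightarrow> 'a set list \<Rightarrow> 'a set list" where
  "greedy_step V E f e H =
     (if \<exists>FV FE. valid_fault V E FV FE f \<and> \<not> damages FV FE e
                \<and> (\<forall>x y. e = {x, y} \<longrightarrow> \<not> connected_in (del_edges (set H) FV FE) x y)
      then H @ [e] else H)"

definition FTGreedyMFDCertificate :: "'a set \<Rightarrow> 'a set list \<Rightarrow> nat \<Rightarrow> 'a set list" where
  "FTGreedyMFDCertificate V es f = fold (greedy_step V (set es) f) es []"

end

theory Submission
  imports Defs
begin

text \<open>Let \<open>e\<^sub>j\<close> be the last edge of a blocked edge list inside a vertex set \<open>S\<close>, and \<open>F\<close>
  the fault set blocking it. In the earlier edges inside \<open>S\<close> minus \<open>F\<close>, the endpoints of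
  \<open>e\<^sub>j\<close> lie in disjoint components \<open>A\<close> and \<open>B\<close>, and a vertex of \<open>A\<close> loses at most
  \<open>f + 2\<close> of its neighbours in \<open>S\<close> when we pass to \<open>A\<close>: only the endpoints of \<open>e\<^sub>j\<close> and
  its at most \<open>f\<close> faulty neighbours. So if every vertex has at least \<open>k(f + 2) + f + 2\<close>
  neighbours in \<open>S\<close>, induction on \<open>k\<close> gives \<open>|S| \<ge> 2\<^sup>k(f + 1)\<close>. For
  \<open>k = \<lceil>log\<^sub>2(n/f)\<rceil>\<close> this exceeds \<open>n\<close>, so the graph is \<open>O(f log(n/f))\<close>-degenerate and
  has \<open>O(f n log(n/f))\<close> edges. The output of the greedy algorithm is itself a blocked edge list.\<close>

lemma connected_in_refl: "connected_in E a a"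
  unfolding connected_in_def by simp

lemma connected_in_step: "connected_in E a b \<Longrightarrow> {b, c} \<in> E \<Longrightarrow> connected_in E a c"
  unfolding connected_in_def by (rule rtrancl_into_rtrancl) auto

lemma connected_in_trans: "connected_in E a b \<Longrightarrow> connected_in E b c \<Longrightarrow> connected_in E a c"
  unfolding connected_in_def by (rule rtrancl_trans)

lemma connected_in_sym: "connected_in E a b \<Longrightarrow> connected_in E b a"
proof -
  have "sym {(a, b). {a, b} \<in> E}" by (auto simp: sym_def insert_commute)
  then show "connected_in E a b \<Longrightarrow> connected_in E b a"
    unfolding connected_in_def by (meson sym_rtrancl symD)
qed

lemma connected_in_mono: "E \<subseteq> E' \<Longrightarrow> connected_in E a b \<Longrightarrow> connected_in E' a b"
  unfolding connected_in_def by (rule rtrancl_mono[THEN subsetD]) auto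

lemma distinct_if_nth_notin_take:
  assumes "\<And>i. i < length xs \<Longrightarrow> xs ! i \<notin> set (take i xs)"
  shows "distinct xs"
  using assms
proof (induction xs rule: rev_induct)
  case (snoc x xs)
  have "x \<notin> set xs" using snoc.prems[of "length xs"] by simp
  moreover have "distinct xs"
  proof (rule snoc.IH)
    fix i assume "i < length xs"
    then show "xs ! i \<notin> set (take i xs)" using snoc.prems[of i] by (simp add: nth_append)
  qed
  ultimately show ?case by simp
qed simp

definition deg_within :: "'a set set \<Rightarrow> 'a set \<Rightarrow> 'a \<Rightarrow> nat" where
  "deg_within H S v = card {u \<in> S. {u, v} \<in> H}"

lemma deg_within_le_card: "finite S \<Longrightarrow> deg_within H S v \<le> card S"
  unfolding deg_within_def by (intro card_mono) auto

lemma card_edges_le_degenerate: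
  assumes "finite S" and two: "\<And>e. e \<in> H \<Longrightarrow> card e = 2"
    and low: "\<And>T. T \<subseteq> S \<Longrightarrow> T \<noteq> {} \<Longrightarrow> \<exists>v\<in>T. deg_within H T v \<le> M"
  shows "card {e \<in> H. e \<subseteq> S} \<le> M * card S"
  using \<open>finite S\<close>
proof (induction S rule: finite_remove_induct)
  case empty
  have "{e \<in> H. e \<subseteq> {}} = {}" using two by fastforce
  then show ?case by simp
next
  case (remove T)
  then obtain v where v: "v \<in> T" "deg_within H T v \<le> M" using low by blast
  define N where "N = {u \<in> T. {u, v} \<in> H}"
  have "{e \<in> H. e \<subseteq> T} \<subseteq> {e \<in> H. e \<subseteq> T - {v}} \<union> (\<lambda>u. {u, v}) ` N"
  proof
    fix e assume e: "e \<in> {e \<in> H. e \<subseteq> T}"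
    show "e \<in> {e \<in> H. e \<subseteq> T - {v}} \<union> (\<lambda>u. {u, v}) ` N"
    proof (cases "v \<in> e")
      case True
      have "card e = 2" using two e by blast
      then obtain u where "e = {u, v}"
        using True by (metis card_2_iff insertE insert_commute singletonD)
      then show ?thesis using e by (auto simp: N_def)
    qed (use e in auto)
  qed
  moreover have "finite {e \<in> H. e \<subseteq> T - {v}}" "finite N"
    using remove.hyps by (auto intro: finite_subset[of _ "Pow T"] simp: N_def)
  ultimately have "card {e \<in> H. e \<subseteq> T} \<le> card ({e \<in> H. e \<subseteq> T - {v}} \<union> (\<lambda>u. {u, v}) ` N)"
    by (intro card_mono) auto
  also have "\<dots> \<le> card {e \<in> H. e \<subseteq> T - {v}} + card ((\<lambda>u. {u, v}) ` N)"
    by (rule card_Un_le)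
  also have "card ((\<lambda>u. {u, v}) ` N) \<le> M"
    using card_image_le[OF \<open>finite N\<close>] v(2) unfolding deg_within_def N_def by (rule le_trans)
  also have "card {e \<in> H. e \<subseteq> T - {v}} \<le> M * card (T - {v})"
    using remove.IH[OF v(1)] .
  also have "M * card (T - {v}) + M = M * card T"
    using card_Suc_Diff1[OF remove.hyps(1) v(1)] by (metis add.commute mult_Suc_right)
  finally show ?case by simp
qed

lemma ceiling_log_bounds:
  fixes n f :: nat
  assumes f: "1 \<le> f" and n: "4 * f \<le> n"
  defines "K \<equiv> nat \<lceil>log 2 (real n / real f)\<rceil>"
  shows "n < 2 ^ K * (f + 1)" "real (K * (f + 2) + f + 1) \<le> 6 * real f * log 2 (real n / real f)"
proof -
  define r where "r = real n / real f"
  have f_pos: "real f > 0" using f by simp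
  have "4 \<le> r" using n f_pos by (simp add: r_def field_simps)
  have log_r: "2 \<le> log 2 r"
  proof -
    have "2 = log 2 (2 ^ 2 :: real)" by (simp only: log_pow_cancel)
    also have "\<dots> \<le> log 2 r" using \<open>4 \<le> r\<close> by simp
    finally show ?thesis .
  qed
  have "real K = of_int \<lceil>log 2 r\<rceil>" using log_r by (simp add: K_def r_def)
  then have K: "log 2 r \<le> K" "K \<le> log 2 r + 1"
    using ceiling_correct[of "log 2 r"] by linarith+
  have "r \<le> 2 powr log 2 r" using \<open>4 \<le> r\<close> by simp
  also have "\<dots> \<le> 2 ^ K" using K(1) by (simp add: powr_realpow[symmetric])
  finally have "real n \<le> 2 ^ K * real f" using f_pos by (simp add: r_def field_simps)
  then have "n \<le> 2 ^ K * f" by (metis of_nat_le_iff of_nat_mult of_nat_numeral of_nat_power)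
  moreover have "(0::nat) < 2 ^ K" by simp
  ultimately show "n < 2 ^ K * (f + 1)" unfolding distrib_left by linarith
  have "K * (f + 2) + f + 1 \<le> (K + 1) * (f + 2)" by simp
  also have "\<dots> \<le> (K + 1) * (3 * f)" using f by (intro mult_le_mono2) simp
  finally have "real (K * (f + 2) + f + 1) \<le> real ((K + 1) * (3 * f))"
    by (simp only: of_nat_le_iff)
  also have "\<dots> = (real K + 1) * (3 * real f)" by (simp add: algebra_simps)
  also have "\<dots> \<le> (2 * log 2 r) * (3 * real f)"
    using K(2) log_r f_pos by (intro mult_right_mono) auto
  also have "\<dots> = 6 * real f * log 2 (real n / real f)" by (simp add: r_def)
  finally show "real (K * (f + 2) + f + 1) \<le> 6 * real f * log 2 (real n / real f)" .
qed

definition fault_blocked :: "'a set \<Rightarrow> 'a set set \<Rightarrow> nat \<Rightarrow> 'a set set \<Rightarrow> 'a set \<Rightarrow> bool" where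
  "fault_blocked V E f H e \<longleftrightarrow> (\<exists>FV FE. valid_fault V E FV FE f \<and> \<not> damages FV FE e
     \<and> (\<forall>x y. e = {x, y} \<longrightarrow> \<not> connected_in (del_edges H FV FE) x y))"

definition blocked_list :: "'a set \<Rightarrow> 'a set set \<Rightarrow> nat \<Rightarrow> 'a set list \<Rightarrow> bool" where
  "blocked_list V E f L \<longleftrightarrow> (\<forall>i < length L. fault_blocked V E f (set (take i L)) (L ! i))"

lemma blocked_list_if_MFD_blocking_set:
  "is_MFD_blocking_set V es f Fs \<Longrightarrow> blocked_list V (set es) f es"
  unfolding is_MFD_blocking_set_def blocked_list_def fault_blocked_def by blast

lemma blocked_list_Nil: "blocked_list V E f []"
  by (simp add: blocked_list_def)

lemma blocked_list_snoc:
  "blocked_list V E f H \<Longrightarrow> fault_blocked V E f (set H) e \<Longrightarrow> blocked_list V E f (H @ [e])"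
  unfolding blocked_list_def by (auto simp: nth_append less_Suc_eq)

lemma greedy_step_eq:
  "greedy_step V E f e H = (if fault_blocked V E f (set H) e then H @ [e] else H)"
  unfolding greedy_step_def fault_blocked_def ..

lemma blocked_list_greedy_fold:
  "blocked_list V E f H \<Longrightarrow> blocked_list V E f (fold (greedy_step V E f) xs H)"
  by (induction xs arbitrary: H) (simp_all add: greedy_step_eq blocked_list_snoc)

lemma set_greedy_fold_subset: "set (fold (greedy_step V E f) xs H) \<subseteq> set H \<union> set xs"
proof (induction xs arbitrary: H)
  case (Cons a xs)
  have "set (greedy_step V E f a H) \<subseteq> set H \<union> {a}" by (auto simp: greedy_step_eq)
  then show ?case using Cons.IH[of "greedy_step V E f a H"] by auto
qed simp

text \<open>Fault degrees are measured in the ambient graph \<open>(V, E)\<close>; \<open>L\<close> is the ordered list of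
  blocked edges (all of \<open>E\<close> for a blocking set, the greedy output for the algorithm).\<close>

locale blocked_edge_list =
  fixes V :: "'a set" and E :: "'a set set" and f :: nat and L :: "'a set list"
  assumes finite_V: "finite V"
    and edge_subset: "e \<in> E \<Longrightarrow> e \<subseteq> V"
    and card_edge: "e \<in> E \<Longrightarrow> card e = 2"
    and set_L_subset: "set L \<subseteq> E"
    and blocked: "blocked_list V E f L"
begin

lemma blockedE:
  assumes "i < length L"
  obtains FV FE x y where "valid_fault V E FV FE f" "\<not> damages FV FE (L ! i)"
    "L ! i = {x, y}" "\<not> connected_in (del_edges (set (take i L)) FV FE) x y"
proof -
  have "card (L ! i) = 2" using assms set_L_subset card_edge by (meson nth_mem subsetD)
  then obtain x y where "L ! i = {x, y}" by (meson card_2_iff)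
  then show ?thesis
    using that blocked assms unfolding blocked_list_def fault_blocked_def by blast
qed

lemma distinct_L: "distinct L"
proof (rule distinct_if_nth_notin_take)
  fix i assume i: "i < length L"
  then obtain FV FE x y where undamaged: "\<not> damages FV FE (L ! i)" and xy: "L ! i = {x, y}"
    and separated: "\<not> connected_in (del_edges (set (take i L)) FV FE) x y"
    by (rule blockedE)
  show "L ! i \<notin> set (take i L)"
  proof
    assume "L ! i \<in> set (take i L)"
    then have "{x, y} \<in> del_edges (set (take i L)) FV FE"
      using undamaged xy by (simp add: damages_def del_edges_def)
    then have "connected_in (del_edges (set (take i L)) FV FE) x y"
      by (rule connected_in_step[OF connected_in_refl])
    with separated show False by contradiction
  qed
qed

definition component :: "'a set set \<Rightarrow> 'a \<Rightarrow> 'a set" where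
  "component R z = {a. connected_in R z a}"

context
  fixes S :: "'a set" and j :: nat and FV :: "'a set" and FE :: "'a set set"
  assumes S_subset: "S \<subseteq> V" and j: "j < length L" "L ! j \<subseteq> S"
    and last: "\<And>i. i < length L \<Longrightarrow> L ! i \<subseteq> S \<Longrightarrow> i \<le> j"
    and fault: "valid_fault V E FV FE f" and undamaged: "\<not> damages FV FE (L ! j)"
begin

lemma last_edge_component_subset:
  assumes "z \<in> L ! j"
  shows "component {e \<in> del_edges (set (take j L)) FV FE. e \<subseteq> S} z \<subseteq> S - FV"
proof
  fix a assume "a \<in> component {e \<in> del_edges (set (take j L)) FV FE. e \<subseteq> S} z"
  then have "(z, a) \<in> {(a, b). {a, b} \<in> {e \<in> del_edges (set (take j L)) FV FE. e \<subseteq> S}}\<^sup>*"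
    unfolding component_def connected_in_def by simp
  then show "a \<in> S - FV"
  proof induction
    case base show ?case using j assms undamaged by (auto simp: damages_def)
  next
    case (step b c) then show ?case by (auto simp: del_edges_def)
  qed
qed

lemma neighbours_last_edge_component:
  assumes z: "z \<in> L ! j"
  defines "A \<equiv> component {e \<in> del_edges (set (take j L)) FV FE. e \<subseteq> S} z"
  assumes a: "a \<in> A"
  shows "{u \<in> S. {u, a} \<in> set L}
    \<subseteq> L ! j \<union> {u. {u, a} \<in> E \<and> (u \<in> FV \<or> {u, a} \<in> FE)} \<union> {u \<in> A. {u, a} \<in> set L}"
proof
  have a_S: "a \<in> S - FV" using last_edge_component_subset[OF z] a by (auto simp: A_def)
  fix u assume u: "u \<in> {u \<in> S. {u, a} \<in> set L}"
  then obtain i where i: "i < length L" "L ! i = {u, a}" by (auto simp: in_set_conv_nth)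
  have "i \<le> j" using last i u a_S by auto
  show "u \<in> L ! j \<union> {u. {u, a} \<in> E \<and> (u \<in> FV \<or> {u, a} \<in> FE)} \<union> {u \<in> A. {u, a} \<in> set L}"
  proof (cases "i = j \<or> u \<in> FV \<or> {u, a} \<in> FE")
    case True
    then show ?thesis using i u set_L_subset by auto
  next
    case False
    then have "{u, a} \<in> set (take j L)"
      using i \<open>i \<le> j\<close> j(1) by (metis in_set_conv_nth length_take min.absorb4 nat_less_le nth_take)
    then have "{a, u} \<in> {e \<in> del_edges (set (take j L)) FV FE. e \<subseteq> S}"
      using False a_S u by (auto simp: del_edges_def insert_commute)
    then have "u \<in> A" using a connected_in_step unfolding A_def component_def by fastforce
    then show ?thesis using u by blast
  qed
qed

lemma deg_within_last_edge_component:
  assumes z: "z \<in> L ! j"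
  defines "A \<equiv> component {e \<in> del_edges (set (take j L)) FV FE. e \<subseteq> S} z"
  assumes a: "a \<in> A"
  shows "deg_within (set L) S a \<le> deg_within (set L) A a + f + 2"
proof -
  define faulty where "faulty = {u. {u, a} \<in> E \<and> (u \<in> FV \<or> {u, a} \<in> FE)}"
  have A_subset: "A \<subseteq> S - FV" using last_edge_component_subset[OF z] by (simp add: A_def)
  have "finite faulty"
    using edge_subset by (intro finite_subset[OF _ finite_V]) (auto simp: faulty_def)
  moreover have "finite {u \<in> A. {u, a} \<in> set L}"
    using A_subset S_subset by (intro finite_subset[OF _ finite_V]) auto
  moreover have two: "card (L ! j) = 2" using j(1) set_L_subset card_edge by (meson nth_mem subsetD)
  ultimately have "deg_within (set L) S a \<le> card (L ! j \<union> faulty \<union> {u \<in> A. {u, a} \<in> set L})"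
    using neighbours_last_edge_component[OF z a[unfolded A_def]]
    unfolding deg_within_def faulty_def A_def by (intro card_mono) (simp_all add: card_ge_0_finite)
  also have "\<dots> \<le> card (L ! j) + card faulty + deg_within (set L) A a"
    unfolding deg_within_def by (meson add_le_mono card_Un_le le_refl order_trans)
  also note two
  also have "card faulty \<le> f"
    using fault a A_subset S_subset unfolding valid_fault_def fault_deg_def faulty_def by blast
  finally show ?thesis by linarith
qed

end

lemma split_at_last_edge:
  assumes S: "S \<subseteq> V" and "\<exists>e\<in>set L. e \<subseteq> S"
  obtains A B where "A \<subseteq> S" "B \<subseteq> S" "A \<noteq> {}" "B \<noteq> {}" "A \<inter> B = {}"
    "\<And>a. a \<in> A \<Longrightarrow> deg_within (set L) S a \<le> deg_within (set L) A a + f + 2"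
    "\<And>b. b \<in> B \<Longrightarrow> deg_within (set L) S b \<le> deg_within (set L) B b + f + 2"
proof -
  define J where "J = {i. i < length L \<and> L ! i \<subseteq> S}"
  have "finite J" "J \<noteq> {}" using assms by (auto simp: J_def in_set_conv_nth)
  define j where "j = Max J"
  have j: "j < length L" "L ! j \<subseteq> S"
    using Max_in[OF \<open>finite J\<close> \<open>J \<noteq> {}\<close>] by (auto simp: j_def J_def)
  have last: "i \<le> j" if "i < length L" "L ! i \<subseteq> S" for i
    using Max_ge[OF \<open>finite J\<close>] that by (auto simp: j_def J_def)
  obtain FV FE x y where fault: "valid_fault V E FV FE f" "\<not> damages FV FE (L ! j)"
    and xy: "L ! j = {x, y}"
    and separated: "\<not> connected_in (del_edges (set (take j L)) FV FE) x y"
    using j(1) by (rule blockedE)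
  define R where "R = {e \<in> del_edges (set (take j L)) FV FE. e \<subseteq> S}"
  define A where "A = component R x"
  define B where "B = component R y"
  have "A \<inter> B = {}"
  proof (rule ccontr)
    assume "A \<inter> B \<noteq> {}"
    then obtain w where "connected_in R x w" "connected_in R y w"
      by (auto simp: A_def B_def component_def)
    then have "connected_in R x y" by (metis connected_in_sym connected_in_trans)
    then have "connected_in (del_edges (set (take j L)) FV FE) x y"
      by (rule connected_in_mono[rotated]) (auto simp: R_def)
    with separated show False by contradiction
  qed
  moreover have "A \<subseteq> S" "B \<subseteq> S"
    using last_edge_component_subset[OF S j last fault] xy by (auto simp: A_def B_def R_def)
  moreover have "x \<in> A" "y \<in> B" by (simp_all add: A_def B_def component_def connected_in_refl)
  moreover have "deg_within (set L) S a \<le> deg_within (set L) A a + f + 2" if "a \<in> A" for a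
    using deg_within_last_edge_component[OF S j last fault, of x] xy that by (simp add: A_def R_def)
  moreover have "deg_within (set L) S b \<le> deg_within (set L) B b + f + 2" if "b \<in> B" for b
    using deg_within_last_edge_component[OF S j last fault, of y] xy that by (simp add: B_def R_def)
  ultimately show ?thesis by (intro that) auto
qed

lemma card_ge_if_min_deg:
  assumes "S \<subseteq> V" "S \<noteq> {}" "\<And>v. v \<in> S \<Longrightarrow> k * (f + 2) + f + 2 \<le> deg_within (set L) S v"
  shows "2 ^ k * (f + 1) \<le> card S"
  using assms
proof (induction k arbitrary: S)
  case 0
  then obtain v where "v \<in> S" by blast
  then have "f + 2 \<le> deg_within (set L) S v" using "0.prems"(3) by simp
  also have "\<dots> \<le> card S"
    using finite_subset[OF "0.prems"(1) finite_V] by (rule deg_within_le_card)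
  finally show ?case by simp
next
  case (Suc k)
  obtain v where v: "v \<in> S" using Suc.prems(2) by blast
  then have "deg_within (set L) S v \<noteq> 0" using Suc.prems(3)[OF v] by linarith
  then have "{u \<in> S. {u, v} \<in> set L} \<noteq> {}" unfolding deg_within_def by force
  then obtain u where "u \<in> S" "{u, v} \<in> set L" by blast
  with v have "\<exists>e\<in>set L. e \<subseteq> S" by (intro bexI[of _ "{u, v}"]) auto
  then obtain A B where AB: "A \<subseteq> S" "B \<subseteq> S" "A \<noteq> {}" "B \<noteq> {}" "A \<inter> B = {}"
    and deg_A: "\<And>a. a \<in> A \<Longrightarrow> deg_within (set L) S a \<le> deg_within (set L) A a + f + 2"
    and deg_B: "\<And>b. b \<in> B \<Longrightarrow> deg_within (set L) S b \<le> deg_within (set L) B b + f + 2"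
    using split_at_last_edge[OF Suc.prems(1)] by metis
  have "2 ^ k * (f + 1) \<le> card A"
  proof (rule Suc.IH)
    fix a assume a: "a \<in> A"
    then have "Suc k * (f + 2) + f + 2 \<le> deg_within (set L) S a"
      using AB(1) by (intro Suc.prems(3)) blast
    with deg_A[OF a] show "k * (f + 2) + f + 2 \<le> deg_within (set L) A a" by simp
  qed (use AB Suc.prems(1) in auto)
  moreover have "2 ^ k * (f + 1) \<le> card B"
  proof (rule Suc.IH)
    fix b assume b: "b \<in> B"
    then have "Suc k * (f + 2) + f + 2 \<le> deg_within (set L) S b"
      using AB(2) by (intro Suc.prems(3)) blast
    with deg_B[OF b] show "k * (f + 2) + f + 2 \<le> deg_within (set L) B b" by simp
  qed (use AB Suc.prems(1) in auto)
  moreover have "card A + card B \<le> card S"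
  proof -
    have "finite S" using Suc.prems(1) finite_V by (rule finite_subset)
    then have "card A + card B = card (A \<union> B)"
      using AB finite_subset[OF AB(1) \<open>finite S\<close>] finite_subset[OF AB(2) \<open>finite S\<close>]
      by (intro card_Un_disjoint[symmetric])
    also have "\<dots> \<le> card S" using AB \<open>finite S\<close> by (intro card_mono) auto
    finally show ?thesis .
  qed
  ultimately show ?case by simp
qed

lemma exists_low_deg_vertex:
  assumes "card V < 2 ^ K * (f + 1)" "S \<subseteq> V" "S \<noteq> {}"
  shows "\<exists>v\<in>S. deg_within (set L) S v \<le> K * (f + 2) + f + 1"
proof (rule ccontr)
  assume "\<not> ?thesis"
  then have "2 ^ K * (f + 1) \<le> card S"
    using assms(2,3) by (intro card_ge_if_min_deg) (auto simp: not_le Suc_le_eq)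
  moreover have "card S \<le> card V" using finite_V assms(2) by (rule card_mono)
  ultimately show False using assms(1) by linarith
qed

lemma length_le_degeneracy:
  assumes "card V < 2 ^ K * (f + 1)"
  shows "length L \<le> (K * (f + 2) + f + 1) * card V"
proof -
  have "{e \<in> set L. e \<subseteq> V} = set L" using set_L_subset edge_subset by auto
  then have "length L = card {e \<in> set L. e \<subseteq> V}" by (simp add: distinct_card[OF distinct_L])
  also have "\<dots> \<le> (K * (f + 2) + f + 1) * card V"
    using card_edge set_L_subset exists_low_deg_vertex[OF assms]
    by (intro card_edges_le_degenerate[OF finite_V]) auto
  finally show ?thesis .
qed

lemma length_le_log_bound:
  assumes "1 \<le> f" "4 * f \<le> card V"
  shows "real (length L) \<le> 6 * real f * real (card V) * log 2 (real (card V) / real f)"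
proof -
  define K where "K = nat \<lceil>log 2 (real (card V) / real f)\<rceil>"
  have "length L \<le> (K * (f + 2) + f + 1) * card V"
    using ceiling_log_bounds(1)[OF assms, folded K_def] by (rule length_le_degeneracy)
  then have "real (length L) \<le> real (K * (f + 2) + f + 1) * real (card V)"
    by (metis of_nat_le_iff of_nat_mult)
  also have "\<dots> \<le> 6 * real f * log 2 (real (card V) / real f) * real (card V)"
    using ceiling_log_bounds(2)[OF assms, folded K_def] by (intro mult_right_mono) auto
  finally show ?thesis by (simp only: ac_simps)
qed

end

theorem mainTheorem4:
  shows "\<exists>C::real.
    (\<forall>(V::'a set) es (f::nat).
       simple_graph V es \<and> f \<ge> 1 \<and> card V > 10 * f \<and> admits_MFD_blocking_set V es f \<longrightarrow>
       real (length es) \<le> C * real f * real (card V) * log 2 (real (card V) / real f))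
  \<and> (\<forall>(V::'a set) es (f::nat).
       simple_graph V es \<and> f \<ge> 1 \<and> card V > 10 * f \<longrightarrow>
       real (length (FTGreedyMFDCertificate V es f))
         \<le> C * real f * real (card V) * log 2 (real (card V) / real f))"
proof (intro exI[of _ 6] conjI allI impI)
  fix V :: "'a set" and es and f :: nat
  assume asm: "simple_graph V es \<and> f \<ge> 1 \<and> card V > 10 * f \<and> admits_MFD_blocking_set V es f"
  then interpret blocked_edge_list V "set es" f es
    by unfold_locales
      (auto simp: simple_graph_def admits_MFD_blocking_set_def dest: blocked_list_if_MFD_blocking_set)
  show "real (length es) \<le> 6 * real f * real (card V) * log 2 (real (card V) / real f)"
    using asm by (intro length_le_log_bound) auto
next
  fix V :: "'a set" and es and f :: nat
  assume asm: "simple_graph V es \<and> f \<ge> 1 \<and> card V > 10 * f"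
  then interpret blocked_edge_list V "set es" f "FTGreedyMFDCertificate V es f"
    using set_greedy_fold_subset[of V "set es" f es "[]"]
      blocked_list_greedy_fold[OF blocked_list_Nil, of V "set es" f es]
    by unfold_locales (auto simp: simple_graph_def FTGreedyMFDCertificate_def)
  show "real (length (FTGreedyMFDCertificate V es f))
      \<le> 6 * real f * real (card V) * log 2 (real (card V) / real f)"
    using asm by (intro length_le_log_bound) auto
qed

end
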